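(* Let $K$ be a Legendrian knot and $p\in K$. Then, for sufficiently small $\varepsilon>0$, the function $\Psi^{\mathrm{loc}}_p(t)=\mu_K(\{q\in K: d_{\mathcal{H}}(p,q)<t\})$, $t>0$, can be extended to a smooth odd function defined on the interval $(-\varepsilon,\varepsilon)$. Furthermore, $\varepsilon$ can be taken independently of $p$.
   Context: $\mathcal{H}=\mathbb{C}\times\mathbb{R}$ is the 3-dimensional Heisenberg group with coordinates $(x,y,u)$, group law $(x,y,u)\cdot(x',y',u')=(x+x',y+y',u+u'+\tfrac12(xy'-x'y))$, horizontal distribution spanned by $X=\partial_x-\tfrac12 y\,\partial_u$, $Y=\partial_y+\tfrac12 x\,\partial_u$ (orthonormal, norm $|\cdot|$). The Korányi distance is $d_{\mathcal{H}}(p,q)=\|p^{-1}q\|_{\mathcal{H}}$ with $\|(x,y,u)\|_{\mathcal{H}}=\sqrt[4]{(x^2+y^2)^2+16u^2}$. A Legendrian knot $K$ is a smooth closed path in $\mathcal{H}$ without self-intersections whose velocity is always horizontal; it is parametrized by arc length $s$ (with respect to $|\cdot|$), and $\mu_K$ is the arc-length measure on $K$. Thus $\Psi^{\mathrm{loc}}_p(t)$ is the length of $K\cap\mathbb{B}_{\mathcal{H}}(p;t)$, where $\mathbb{B}_{\mathcal{H}}(p;t)$ is the open Korányi ball. *)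

theory Defs
  imports "HOL-Analysis.Analysis"
begin

type_synonym heis = "real \<times> real \<times> real"

definition heis_mult :: "heis \<Rightarrow> heis \<Rightarrow> heis" where
  "heis_mult p q = (case p of (x, y, u) \<Rightarrow> case q of (x', y', u') \<Rightarrow>
      (x + x', y + y', u + u' + (x * y' - x' * y) / 2))"

definition heis_inv :: "heis \<Rightarrow> heis" where
  "heis_inv p = (case p of (x, y, u) \<Rightarrow> (-x, -y, -u))"

definition koranyi_norm :: "heis \<Rightarrow> real" where
  "koranyi_norm p = (case p of (x, y, u) \<Rightarrow> root 4 ((x^2 + y^2)^2 + 16 * u^2))"

definition koranyi_dist :: "heis \<Rightarrow> heis \<Rightarrow> real" where
  "koranyi_dist p q = koranyi_norm (heis_mult (heis_inv p) q)"

definition smooth_real :: "(real \<Rightarrow> real) \<Rightarrow> bool" where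
  "smooth_real f \<longleftrightarrow> (\<forall>n x. (deriv ^^ n) f differentiable (at x))"

definition smooth_real_on :: "real set \<Rightarrow> (real \<Rightarrow> real) \<Rightarrow> bool" where
  "smooth_real_on S f \<longleftrightarrow> (\<forall>n. \<forall>x\<in>S. (deriv ^^ n) f differentiable (at x))"

text \<open>A Legendrian knot of length L, parametrized by arc length s as an L-periodic
  smooth curve, injective on one period, with horizontal velocity of unit horizontal norm.\<close>
definition legendrian_knot :: "(real \<Rightarrow> heis) \<Rightarrow> real \<Rightarrow> bool" where
  "legendrian_knot \<gamma> L \<longleftrightarrow>
     L > 0 \<and>
     smooth_real (\<lambda>s. fst (\<gamma> s)) \<and>
     smooth_real (\<lambda>s. fst (snd (\<gamma> s))) \<and>
     smooth_real (\<lambda>s. snd (snd (\<gamma> s))) \<and>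
     (\<forall>s. \<gamma> (s + L) = \<gamma> s) \<and>
     inj_on \<gamma> {0..<L} \<and>
     (\<forall>s. deriv (\<lambda>s. snd (snd (\<gamma> s))) s =
            (fst (\<gamma> s) * deriv (\<lambda>s. fst (snd (\<gamma> s))) s
             - deriv (\<lambda>s. fst (\<gamma> s)) s * fst (snd (\<gamma> s))) / 2) \<and>
     (\<forall>s. (deriv (\<lambda>s. fst (\<gamma> s)) s)^2 + (deriv (\<lambda>s. fst (snd (\<gamma> s))) s)^2 = 1)"

text \<open>Psi^loc_p(t): arc length of K inside the open Koranyi ball B(p;t).\<close>
definition Psi_loc :: "(real \<Rightarrow> heis) \<Rightarrow> real \<Rightarrow> heis \<Rightarrow> real \<Rightarrow> real" where
  "Psi_loc \<gamma> L p t = measure lebesgue {s \<in> {0..<L}. koranyi_dist p (\<gamma> s) < t}"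

end

theory Submission
  imports Defs "HOL-Library.Periodic_Fun"
begin

text \<open>
  Write p = \<gamma>(s0). After left translation by p\<inverse>, the Koranyi distance from p to \<gamma>(s0 + h)
  is the fourth root of gauge4 s0 h = (X^2 + Y^2)^2 + 16 U^2, where (X, Y, U) are the coordinates
  of \<gamma>(s0)\<inverse> \<gamma>(s0 + h). Hadamard's lemma gives X = h A(h) and Y = h B(h); because the curve is
  horizontal, U' = (X y' - x' Y)/2 = O(h^2), hence U = h^3 C(h). So gauge4 s0 h = h^4 \<phi>(h) with
  \<phi> smooth and \<phi>(0) = 1, and r(h) = h \<phi>(h)^(1/4) is a smooth signed fourth root of the gauge.
  A bound on the second derivatives of the projected curve gives r' > 0 on an interval whose
  length does not depend on s0. Near p the ball of radius t meets the knot exactly in the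
  parameters r\<inverse>(-t) < h < r\<inverse>(t); away from p, compactness and injectivity keep the knot at a
  positive distance m. Hence for small t the arc length is r\<inverse>(t) - r\<inverse>(-t), a smooth odd function.
\<close>

section \<open>Finite-order differentiability\<close>

definition derivs_differentiable_on :: "nat \<Rightarrow> real set \<Rightarrow> (real \<Rightarrow> real) \<Rightarrow> bool" where
  "derivs_differentiable_on n S f \<longleftrightarrow> (\<forall>k\<le>n. \<forall>x\<in>S. (deriv ^^ k) f differentiable (at x))"

lemma smooth_real_on_iff_derivs_differentiable_on:
  "smooth_real_on S f \<longleftrightarrow> (\<forall>n. derivs_differentiable_on n S f)"
  by (auto simp: derivs_differentiable_on_def smooth_real_on_def)

lemma smooth_real_iff_smooth_real_on_UNIV: "smooth_real f \<longleftrightarrow> smooth_real_on UNIV f"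
  by (simp add: smooth_real_def smooth_real_on_def)

lemma derivs_differentiable_on_0:
  "derivs_differentiable_on 0 S f \<longleftrightarrow> (\<forall>x\<in>S. f differentiable (at x))"
  by (simp add: derivs_differentiable_on_def)

lemma derivs_differentiable_on_Suc:
  "derivs_differentiable_on (Suc n) S f \<longleftrightarrow>
     (\<forall>x\<in>S. f differentiable (at x)) \<and> derivs_differentiable_on n S (deriv f)"
proof -
  have "(\<forall>k\<le>Suc n. P k) \<longleftrightarrow> P 0 \<and> (\<forall>k\<le>n. P (Suc k))" for P
    by (metis Suc_le_mono le0 not0_implies_Suc)
  then show ?thesis
    unfolding derivs_differentiable_on_def by (simp add: funpow_Suc_right del: funpow.simps)
qed

lemma derivs_differentiable_on_deriv:
  "derivs_differentiable_on (Suc n) S f \<Longrightarrow> derivs_differentiable_on n S (deriv f)"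
  by (simp add: derivs_differentiable_on_Suc)

lemma derivs_differentiable_on_DERIV:
  "derivs_differentiable_on n S f \<Longrightarrow> x \<in> S \<Longrightarrow> (f has_real_derivative deriv f x) (at x)"
  by (force simp: derivs_differentiable_on_def DERIV_deriv_iff_real_differentiable)

lemma derivs_differentiable_on_mono:
  "derivs_differentiable_on n S f \<Longrightarrow> m \<le> n \<Longrightarrow> derivs_differentiable_on m S f"
  by (auto simp: derivs_differentiable_on_def)

lemma derivs_differentiable_on_subset:
  "derivs_differentiable_on n S f \<Longrightarrow> T \<subseteq> S \<Longrightarrow> derivs_differentiable_on n T f"
  by (auto simp: derivs_differentiable_on_def)

lemma derivs_differentiable_on_cong:
  assumes "open S" and eq: "\<And>x. x \<in> S \<Longrightarrow> f x = g x" and f: "derivs_differentiable_on n S f"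
  shows "derivs_differentiable_on n S g"
proof -
  have "(deriv ^^ k) f x = (deriv ^^ k) g x" if "x \<in> S" for k x
    using assms(1) eq that by (intro higher_deriv_cong_ev refl) (auto simp: eventually_nhds)
  with f show ?thesis
    unfolding derivs_differentiable_on_def differentiable_def
    by (meson has_derivative_transform_within_open \<open>open S\<close>)
qed

lemma derivs_differentiable_on_SucI:
  assumes "open S" and D: "\<And>x. x \<in> S \<Longrightarrow> (f has_real_derivative f' x) (at x)"
    and f': "derivs_differentiable_on n S f'"
  shows "derivs_differentiable_on (Suc n) S f"
proof -
  have "derivs_differentiable_on n S (deriv f)"
    by (rule derivs_differentiable_on_cong[OF \<open>open S\<close> _ f']) (metis D DERIV_imp_deriv)
  with D show ?thesis
    by (auto simp: derivs_differentiable_on_Suc real_differentiable_def)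
qed

lemma derivs_differentiable_on_const: "derivs_differentiable_on n S (\<lambda>x. c)"
  by (induction n arbitrary: c) (simp_all add: derivs_differentiable_on_Suc
      derivs_differentiable_on_0)

lemma derivs_differentiable_on_ident: "derivs_differentiable_on n S (\<lambda>x. x)"
  by (cases n) (simp_all add: derivs_differentiable_on_Suc derivs_differentiable_on_0
      derivs_differentiable_on_const)

lemma derivs_differentiable_on_add:
  assumes "open S" "derivs_differentiable_on n S f" "derivs_differentiable_on n S g"
  shows "derivs_differentiable_on n S (\<lambda>x. f x + g x)"
  using assms(2,3)
proof (induction n arbitrary: f g)
  case 0
  then show ?case by (auto simp: derivs_differentiable_on_0)
next
  case (Suc n)
  show ?case
    by (rule derivs_differentiable_on_SucI[OF \<open>open S\<close> DERIV_add Suc.IH])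
       (use Suc.prems in \<open>auto intro: derivs_differentiable_on_DERIV
           derivs_differentiable_on_deriv\<close>)
qed

lemma derivs_differentiable_on_mult:
  assumes "open S" "derivs_differentiable_on n S f" "derivs_differentiable_on n S g"
  shows "derivs_differentiable_on n S (\<lambda>x. f x * g x)"
  using assms(2,3)
proof (induction n arbitrary: f g)
  case 0
  then show ?case by (auto simp: derivs_differentiable_on_0)
next
  case (Suc n)
  have "derivs_differentiable_on n S f" "derivs_differentiable_on n S g"
    "derivs_differentiable_on n S (deriv f)" "derivs_differentiable_on n S (deriv g)"
    using Suc.prems derivs_differentiable_on_mono derivs_differentiable_on_deriv by auto
  then have "derivs_differentiable_on n S (\<lambda>x. deriv f x * g x + deriv g x * f x)"
    by (intro derivs_differentiable_on_add \<open>open S\<close> Suc.IH)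
  moreover have "((\<lambda>x. f x * g x) has_real_derivative deriv f x * g x + deriv g x * f x) (at x)"
    if "x \<in> S" for x
    using Suc.prems that by (intro DERIV_mult derivs_differentiable_on_DERIV)
  ultimately show ?case
    by (intro derivs_differentiable_on_SucI[OF \<open>open S\<close>])
qed

lemma derivs_differentiable_on_compose:
  assumes "open S" "open T" and f: "derivs_differentiable_on n S f"
    and g: "derivs_differentiable_on n T g" and fST: "\<And>x. x \<in> S \<Longrightarrow> f x \<in> T"
  shows "derivs_differentiable_on n S (\<lambda>x. g (f x))"
  using f g
proof (induction n arbitrary: g)
  case 0
  then show ?case
    using fST differentiable_chain_at[of f _ g] by (auto simp: derivs_differentiable_on_0 o_def)
next
  case (Suc n)
  have "derivs_differentiable_on n S (\<lambda>x. deriv g (f x))"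
    using Suc derivs_differentiable_on_mono derivs_differentiable_on_deriv
    by (metis le_SucI order_refl)
  then have "derivs_differentiable_on n S (\<lambda>x. deriv g (f x) * deriv f x)"
    using Suc.prems by (intro derivs_differentiable_on_mult \<open>open S\<close> derivs_differentiable_on_deriv)
  moreover have "((\<lambda>x. g (f x)) has_real_derivative deriv g (f x) * deriv f x) (at x)"
    if "x \<in> S" for x
    using Suc.prems that fST by (intro DERIV_chain2 derivs_differentiable_on_DERIV)
  ultimately show ?case
    by (intro derivs_differentiable_on_SucI[OF \<open>open S\<close>])
qed

lemma derivs_differentiable_on_cmult:
  "open S \<Longrightarrow> derivs_differentiable_on n S f \<Longrightarrow> derivs_differentiable_on n S (\<lambda>x. c * f x)"
  by (rule derivs_differentiable_on_mult[OF _ derivs_differentiable_on_const])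

lemma derivs_differentiable_on_diff:
  assumes "open S" "derivs_differentiable_on n S f" "derivs_differentiable_on n S g"
  shows "derivs_differentiable_on n S (\<lambda>x. f x - g x)"
  using derivs_differentiable_on_add[OF assms(1,2)
      derivs_differentiable_on_cmult[OF assms(1,3), of "-1"]]
  by simp

lemma derivs_differentiable_on_power:
  "open S \<Longrightarrow> derivs_differentiable_on n S f \<Longrightarrow> derivs_differentiable_on n S (\<lambda>x. f x ^ k)"
  by (induction k) (simp_all add: derivs_differentiable_on_const derivs_differentiable_on_mult)

lemma derivs_differentiable_on_inverse: "derivs_differentiable_on n (-{0}) inverse"
proof (induction n)
  case 0
  then show ?case
    by (auto simp: derivs_differentiable_on_0 real_differentiable_def intro: DERIV_inverse)
next
  case (Suc n)
  have "derivs_differentiable_on n (-{0}) (\<lambda>x. - 1 * (inverse x ^ Suc (Suc 0)))"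
    by (intro derivs_differentiable_on_cmult derivs_differentiable_on_power Suc) auto
  then have "derivs_differentiable_on n (-{0}) (\<lambda>x. - (inverse x ^ Suc (Suc 0)))"
    by simp
  then show ?case
    by (rule derivs_differentiable_on_SucI[rotated 2]) (blast intro: DERIV_inverse)+
qed

lemma derivs_differentiable_on_root:
  assumes "0 < m" shows "derivs_differentiable_on n {0<..} (root m)"
proof (induction n)
  case 0
  then show ?case
    using DERIV_real_root[OF assms]
    by (auto simp: derivs_differentiable_on_0 real_differentiable_def)
next
  case (Suc n)
  have "derivs_differentiable_on n {0<..} (\<lambda>z. real m * root m z ^ (m - Suc 0))"
    by (intro derivs_differentiable_on_cmult derivs_differentiable_on_power Suc) auto
  then have "derivs_differentiable_on n {0<..} (\<lambda>z. inverse (real m * root m z ^ (m - Suc 0)))"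
    using assms
    by (intro derivs_differentiable_on_compose[OF _ _ _ derivs_differentiable_on_inverse]) auto
  then show ?case
    by (rule derivs_differentiable_on_SucI[rotated 2]) (use DERIV_real_root[OF assms] in auto)
qed

section \<open>Smooth functions and Hadamard's lemma\<close>

lemma smooth_real_derivs_differentiable_on: "smooth_real f \<Longrightarrow> derivs_differentiable_on n S f"
  by (auto simp: derivs_differentiable_on_def smooth_real_def)

lemma smooth_real_deriv: "smooth_real f \<Longrightarrow> smooth_real (deriv f)"
  unfolding smooth_real_def by (metis funpow_Suc_right o_apply)

lemma smooth_real_DERIV: "smooth_real f \<Longrightarrow> (f has_real_derivative deriv f x) (at x)"
  by (metis smooth_real_def funpow_0 DERIV_deriv_iff_real_differentiable)

lemma smooth_real_continuous_on: "smooth_real f \<Longrightarrow> continuous_on S f"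
  using smooth_real_DERIV DERIV_isCont continuous_at_imp_continuous_on by blast

lemma smooth_real_const: "smooth_real (\<lambda>x. c)"
  by (simp add: smooth_real_iff_smooth_real_on_UNIV smooth_real_on_iff_derivs_differentiable_on
      derivs_differentiable_on_const)

lemma smooth_real_ident: "smooth_real (\<lambda>x. x)"
  by (simp add: smooth_real_iff_smooth_real_on_UNIV smooth_real_on_iff_derivs_differentiable_on
      derivs_differentiable_on_ident)

lemma smooth_real_add: "smooth_real f \<Longrightarrow> smooth_real g \<Longrightarrow> smooth_real (\<lambda>x. f x + g x)"
  by (simp add: smooth_real_iff_smooth_real_on_UNIV smooth_real_on_iff_derivs_differentiable_on
      derivs_differentiable_on_add)

lemma smooth_real_diff: "smooth_real f \<Longrightarrow> smooth_real g \<Longrightarrow> smooth_real (\<lambda>x. f x - g x)"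
  by (simp add: smooth_real_iff_smooth_real_on_UNIV smooth_real_on_iff_derivs_differentiable_on
      derivs_differentiable_on_diff)

lemma smooth_real_mult: "smooth_real f \<Longrightarrow> smooth_real g \<Longrightarrow> smooth_real (\<lambda>x. f x * g x)"
  by (simp add: smooth_real_iff_smooth_real_on_UNIV smooth_real_on_iff_derivs_differentiable_on
      derivs_differentiable_on_mult)

lemma smooth_real_power: "smooth_real f \<Longrightarrow> smooth_real (\<lambda>x. f x ^ k)"
  by (simp add: smooth_real_iff_smooth_real_on_UNIV smooth_real_on_iff_derivs_differentiable_on
      derivs_differentiable_on_power)

lemma smooth_real_divide: "smooth_real f \<Longrightarrow> smooth_real (\<lambda>x. f x / c)"
  using smooth_real_mult[OF _ smooth_real_const, of f "inverse c"] by (simp add: divide_inverse)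

lemma smooth_real_compose: "smooth_real f \<Longrightarrow> smooth_real g \<Longrightarrow> smooth_real (\<lambda>x. g (f x))"
  unfolding smooth_real_iff_smooth_real_on_UNIV smooth_real_on_iff_derivs_differentiable_on
  by (metis derivs_differentiable_on_compose UNIV_I open_UNIV)

lemma smooth_real_shift: "smooth_real f \<Longrightarrow> smooth_real (\<lambda>h. f (s + h))"
  by (rule smooth_real_compose[OF smooth_real_add[OF smooth_real_const smooth_real_ident]])

lemma smooth_real_shift_DERIV:
  "smooth_real f \<Longrightarrow> ((\<lambda>h. f (s + h)) has_real_derivative deriv f (s + h)) (at h)"
  using DERIV_chain2[OF smooth_real_DERIV DERIV_add[OF DERIV_const DERIV_ident]] by simp

lemma smooth_real_on_odd_part:
  assumes "\<And>n. derivs_differentiable_on n {-a<..<a} f"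
  shows "smooth_real_on {-a<..<a} (\<lambda>t. f t - f (- t))"
proof -
  have "derivs_differentiable_on n {-a<..<a} (\<lambda>t. f (-1 * t))" for n
    by (rule derivs_differentiable_on_compose[OF _ _
          derivs_differentiable_on_cmult[OF _ derivs_differentiable_on_ident] assms]) auto
  then show ?thesis
    unfolding smooth_real_on_iff_derivs_differentiable_on
    using assms by (auto intro: derivs_differentiable_on_diff)
qed

text \<open>Shift and composition are left out: their conclusions unify with almost any goal, so
  the intro method would loop on them.\<close>
lemmas smooth_real_intros =
  smooth_real_const smooth_real_ident smooth_real_add smooth_real_diff smooth_real_mult
  smooth_real_divide smooth_real_power

definition hadamard_integral :: "nat \<Rightarrow> (real \<Rightarrow> real) \<Rightarrow> real \<Rightarrow> real" where
  "hadamard_integral k f h = integral {0..1} (\<lambda>\<tau>. \<tau> ^ k * f (\<tau> * h))"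

lemma hadamard_integral_has_real_derivative:
  assumes "smooth_real f"
  shows "(hadamard_integral k f has_real_derivative hadamard_integral (Suc k) (deriv f) h) (at h)"
proof -
  have "((\<lambda>h. integral (cbox 0 1) (\<lambda>\<tau>. \<tau> ^ k * f (\<tau> * h))) has_field_derivative
      integral (cbox 0 1) (\<lambda>\<tau>. \<tau> ^ Suc k * deriv f (\<tau> * h))) (at h within UNIV)"
  proof (rule leibniz_rule_field_derivative)
    fix h \<tau> :: real
    have "((\<lambda>h. f (\<tau> * h)) has_real_derivative deriv f (\<tau> * h) * \<tau>) (at h)"
      by (rule DERIV_chain2[OF smooth_real_DERIV[OF assms]]) (auto intro!: derivative_eq_intros)
    from DERIV_cmult[OF this, of "\<tau> ^ k"]
    show "((\<lambda>h. \<tau> ^ k * f (\<tau> * h)) has_real_derivative \<tau> ^ Suc k * deriv f (\<tau> * h))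
        (at h within UNIV)"
      by (simp add: algebra_simps)
  next
    fix h :: real
    show "(\<lambda>\<tau>. \<tau> ^ k * f (\<tau> * h)) integrable_on cbox 0 1"
      by (intro integrable_continuous continuous_intros
          continuous_on_compose2[OF smooth_real_continuous_on[OF assms]]) auto
  next
    have "continuous_on UNIV (\<lambda>p::real \<times> real. snd p ^ Suc k * deriv f (snd p * fst p))"
      by (intro continuous_intros continuous_on_compose2[OF
          smooth_real_continuous_on[OF smooth_real_deriv[OF assms]]]) auto
    then show "continuous_on (UNIV \<times> cbox 0 1) (\<lambda>(h, \<tau>). \<tau> ^ Suc k * deriv f (\<tau> * h))"
      unfolding case_prod_unfold by (rule continuous_on_subset) auto
  qed auto
  then show ?thesis by (simp add: hadamard_integral_def[abs_def] cbox_interval)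
qed

lemma smooth_real_hadamard_integral:
  assumes "smooth_real f" shows "smooth_real (hadamard_integral k f)"
proof -
  have "\<forall>f k. smooth_real f \<longrightarrow> (\<forall>x. (deriv ^^ n) (hadamard_integral k f) differentiable (at x))"
      for n
  proof (induction n)
    case 0
    then show ?case using hadamard_integral_has_real_derivative real_differentiable_def by auto
  next
    case (Suc n)
    have "deriv (hadamard_integral k f) = hadamard_integral (Suc k) (deriv f)" if "smooth_real f"
        for f k
      using hadamard_integral_has_real_derivative[OF that] by (intro ext DERIV_imp_deriv)
    with Suc show ?case
      by (simp add: funpow_Suc_right smooth_real_deriv del: funpow.simps)
  qed
  with assms show ?thesis unfolding smooth_real_def by blast
qed

lemma hadamard_integral_0_at_0: "hadamard_integral 0 f 0 = f 0"
  by (simp add: hadamard_integral_def)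

lemma hadamard_lemma:
  assumes f: "smooth_real f" "f 0 = 0" and E: "continuous_on UNIV E"
    and f': "\<And>s. deriv f s = s ^ k * E s"
  shows "f h = h ^ Suc k * hadamard_integral k E h"
proof -
  have "((\<lambda>\<tau>. h ^ Suc k * (\<tau> ^ k * E (\<tau> * h))) has_integral f (1 * h) - f (0 * h)) {0..1}"
  proof (rule fundamental_theorem_of_calculus)
    fix \<tau> :: real
    have "((\<lambda>\<tau>. f (\<tau> * h)) has_real_derivative deriv f (\<tau> * h) * h) (at \<tau>)"
      by (rule DERIV_chain2[OF smooth_real_DERIV[OF f(1)]]) (auto intro!: derivative_eq_intros)
    then show "((\<lambda>\<tau>. f (\<tau> * h)) has_vector_derivative h ^ Suc k * (\<tau> ^ k * E (\<tau> * h)))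
        (at \<tau> within {0..1})"
      by (simp add: f' power_mult_distrib algebra_simps has_field_derivative_at_within
          flip: has_real_derivative_iff_has_vector_derivative)
  qed simp
  then show ?thesis
    using f(2) by (simp add: hadamard_integral_def integral_unique flip: integral_mult_right)
qed

lemma smooth_real_increment_factor:
  assumes "smooth_real f"
  obtains A where "smooth_real A" "A 0 = deriv f s" "\<And>h. f (s + h) - f s = h * A h"
proof
  let ?f' = "\<lambda>h. deriv f (s + h)"
  have "smooth_real ?f'"
    by (intro smooth_real_shift smooth_real_deriv assms)
  then show "smooth_real (hadamard_integral 0 ?f')" "hadamard_integral 0 ?f' 0 = deriv f s"
    by (simp_all add: smooth_real_hadamard_integral hadamard_integral_0_at_0)
  fix h
  have "(\<lambda>h. f (s + h) - f s) h = h ^ Suc 0 * hadamard_integral 0 ?f' h"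
  proof (rule hadamard_lemma)
    show "smooth_real (\<lambda>h. f (s + h) - f s)"
      by (rule smooth_real_diff[OF smooth_real_shift[OF assms] smooth_real_const])
    show "continuous_on UNIV ?f'"
      by (rule smooth_real_continuous_on[OF \<open>smooth_real ?f'\<close>])
    fix t
    show "deriv (\<lambda>h. f (s + h) - f s) t = t ^ 0 * ?f' t"
      using DERIV_diff[OF smooth_real_shift_DERIV[OF assms] DERIV_const]
      by (simp add: DERIV_imp_deriv)
  qed simp
  then show "f (s + h) - f s = h * hadamard_integral 0 ?f' h"
    by simp
qed

section \<open>Inverse functions and derivative bounds\<close>

lemma derivs_differentiable_on_inverse_function:
  assumes "open I" "open J" and r: "\<And>n. derivs_differentiable_on n I r"
    and r': "\<And>x. x \<in> I \<Longrightarrow> deriv r x \<noteq> 0"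
    and ri: "\<And>t. t \<in> J \<Longrightarrow> ri t \<in> I \<and> r (ri t) = t \<and> isCont ri t"
  shows "derivs_differentiable_on n J ri"
proof -
  have ri': "(ri has_real_derivative inverse (deriv r (ri t))) (at t)" if "t \<in> J" for t
  proof -
    obtain e where "e > 0" "ball t e \<subseteq> J"
      using \<open>open J\<close> \<open>t \<in> J\<close> open_contains_ball by blast
    then have r_ri: "r (ri y) = y" if "t - e < y" "y < t + e" for y
      using ri that by (auto simp: dist_real_def subset_iff)
    show ?thesis
    proof (rule DERIV_inverse_function[where a = "t - e" and b = "t + e"])
      show "(r has_real_derivative deriv r (ri t)) (at (ri t))" "deriv r (ri t) \<noteq> 0"
        using derivs_differentiable_on_DERIV[OF r] r' ri[OF \<open>t \<in> J\<close>] by blast+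
    qed (use \<open>e > 0\<close> ri[OF \<open>t \<in> J\<close>] r_ri in auto)
  qed
  show ?thesis
  proof (induction n)
    case 0
    then show ?case
      using ri' by (auto simp: derivs_differentiable_on_0 real_differentiable_def)
  next
    case (Suc n)
    have r'_ri: "derivs_differentiable_on n J (\<lambda>t. deriv r (ri t))"
      by (rule derivs_differentiable_on_compose[OF \<open>open J\<close> \<open>open I\<close> Suc.IH
            derivs_differentiable_on_deriv[OF r]]) (use ri in blast)
    have inv_r'_ri: "derivs_differentiable_on n J (\<lambda>t. inverse (deriv r (ri t)))"
      by (rule derivs_differentiable_on_compose[OF \<open>open J\<close> _ r'_ri
            derivs_differentiable_on_inverse]) (use r' ri in auto)
    show ?case
      by (rule derivs_differentiable_on_SucI[OF \<open>open J\<close> ri' inv_r'_ri])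
  qed
qed

lemma deriv_pos_imp_strict_mono_on:
  assumes "\<And>x. x \<in> {a<..<b} \<Longrightarrow> (r has_real_derivative r' x) (at x)"
    and "\<And>x. x \<in> {a<..<b} \<Longrightarrow> r' x > 0"
  shows "strict_mono_on {a<..<b} r"
proof (rule strict_mono_onI)
  fix x y assume "x \<in> {a<..<b}" "y \<in> {a<..<b}" "x < y"
  then have D: "\<exists>D. (r has_real_derivative D) (at z) \<and> D > 0" if "x \<le> z" "z \<le> y" for z
    using assms that by (metis greaterThanLessThan_iff order.strict_trans1 order.strict_trans2)
  show "r x < r y"
    by (rule DERIV_pos_imp_increasing[OF \<open>x < y\<close> D])
qed

lemma smooth_strict_mono_inverse:
  assumes r: "\<And>n. derivs_differentiable_on n {a<..<b} r"
    and r': "\<And>x. x \<in> {a<..<b} \<Longrightarrow> deriv r x > 0" and "a < c" "c < d" "d < b"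
  obtains ri where "\<And>n. derivs_differentiable_on n {r c<..<r d} ri"
    and "\<And>t. t \<in> {r c<..<r d} \<Longrightarrow> ri t \<in> {c<..<d} \<and> r (ri t) = t"
proof -
  have r_DERIV: "(r has_real_derivative deriv r x) (at x)" if "x \<in> {a<..<b}" for x
    using derivs_differentiable_on_DERIV[OF r that] .
  have cd: "{c..d} \<subseteq> {a<..<b}"
    using assms by auto
  have "inj_on r {c..d}"
    using deriv_pos_imp_strict_mono_on[OF r_DERIV r'] strict_mono_on_imp_inj_on inj_on_subset cd
    by metis
  then have ri_r: "inv_into {c..d} r (r x) = x" if "x \<in> {c..d}" for x
    using that by simp
  have r_cont: "isCont r x" if "x \<in> {c..d}" for x
    using cd that r_DERIV DERIV_isCont by blast
  then have "continuous_on {c..d} r"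
    by (intro continuous_at_imp_continuous_on) blast
  have inv: "inv_into {c..d} r t \<in> {c<..<d} \<and> r (inv_into {c..d} r t) = t \<and>
      isCont (inv_into {c..d} r) t" if t: "t \<in> {r c<..<r d}" for t
  proof -
    from IVT'[of r c t d, OF _ _ _ \<open>continuous_on {c..d} r\<close>] t \<open>c < d\<close>
    obtain x where x: "c \<le> x" "x \<le> d" "r x = t"
      by auto
    with t have "x \<in> {c<..<d}"
      by (cases "x = c \<or> x = d") auto
    moreover have "isCont (inv_into {c..d} r) (r x)"
      by (rule isCont_inverse_function2[of c x d]) (use \<open>x \<in> {c<..<d}\<close> ri_r r_cont in auto)
    ultimately show ?thesis
      using ri_r x by auto
  qed
  show thesis
  proof
    show "derivs_differentiable_on n {r c<..<r d} (inv_into {c..d} r)" for n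
    proof (rule derivs_differentiable_on_inverse_function[OF _ _ r])
      show "deriv r x \<noteq> 0" if "x \<in> {a<..<b}" for x
        using r'[OF that] by simp
      show "inv_into {c..d} r t \<in> {a<..<b} \<and> r (inv_into {c..d} r t) = t \<and>
          isCont (inv_into {c..d} r) t" if "t \<in> {r c<..<r d}" for t
        using inv[OF that] \<open>a < c\<close> \<open>d < b\<close> by auto
    qed auto
  qed (use inv in blast)
qed

lemma deriv_pos_of_fourth_power:
  assumes "open I" "h \<in> I" and F: "\<And>z. z \<in> I \<Longrightarrow> r z ^ 4 = F z"
    and r': "(r has_real_derivative r') (at h)" and F': "(F has_real_derivative F') (at h)"
    and "0 < h * F'" "0 < h * r h"
  shows "0 < r'"
proof -
  have "((\<lambda>z. r z ^ 4) has_real_derivative 4 * r h ^ 3 * r') (at h)"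
    using DERIV_power[OF r', of 4] by (simp add: algebra_simps)
  then have "(F has_real_derivative 4 * r h ^ 3 * r') (at h)"
    by (rule has_field_derivative_transform_within_open[OF _ \<open>open I\<close> \<open>h \<in> I\<close> F])
  then have "h * F' = (4 * r') * ((h * r h) * (r h)\<^sup>2)"
    using DERIV_unique[OF F'] by (simp add: power2_eq_square power3_eq_cube algebra_simps)
  moreover have "r h \<noteq> 0"
    using \<open>0 < h * r h\<close> by auto
  with \<open>0 < h * r h\<close> have "0 < (h * r h) * (r h)\<^sup>2"
    by simp
  ultimately have "0 < 4 * r'"
    using \<open>0 < h * F'\<close> by (metis zero_less_mult_pos2)
  then show ?thesis
    by simp
qed

lemma abs_diff_le_DERIV_bound:
  fixes f f' :: "real \<Rightarrow> real"
  assumes "\<And>z. z \<in> closed_segment a b \<Longrightarrow> (f has_real_derivative f' z) (at z)"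
    and "\<And>z. z \<in> closed_segment a b \<Longrightarrow> \<bar>f' z\<bar> \<le> B"
  shows "\<bar>f b - f a\<bar> \<le> B * \<bar>b - a\<bar>"
  using field_differentiable_bound[OF convex_closed_segment, of a b f f' B b a] assms
  by (simp add: has_field_derivative_at_within)

lemma smooth_real_increment_deriv_error:
  assumes f: "smooth_real f" and f'': "\<And>s. \<bar>deriv (deriv f) s\<bar> \<le> M"
  shows "\<bar>f (s + h) - f s - h * deriv f (s + h)\<bar> \<le> M * h\<^sup>2"
proof -
  have "0 \<le> M"
    using f''[of 0] by linarith
  have f'_Lipschitz: "\<bar>deriv f t - deriv f (s + h)\<bar> \<le> M * \<bar>h\<bar>" if "t \<in> closed_segment s (s + h)"
      for t
  proof -
    have "\<bar>deriv f t - deriv f (s + h)\<bar> \<le> M * \<bar>t - (s + h)\<bar>"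
      by (rule abs_diff_le_DERIV_bound[OF smooth_real_DERIV[OF smooth_real_deriv[OF f]] f''])
    also have "\<dots> \<le> M * \<bar>h\<bar>"
      using dist_in_closed_segment[OF that] \<open>0 \<le> M\<close>
      by (intro mult_left_mono) (auto simp: dist_real_def)
    finally show ?thesis .
  qed
  have "((\<lambda>t. f t - t * deriv f (s + h)) has_real_derivative deriv f t - deriv f (s + h)) (at t)"
      for t
    using smooth_real_DERIV[OF f] by (auto intro!: derivative_eq_intros)
  from abs_diff_le_DERIV_bound[where a = s and b = "s + h", OF this f'_Lipschitz]
  show ?thesis
    by (simp add: algebra_simps power2_eq_square abs_mult_self_eq)
qed

lemma unit_vector_perturbation_estimates:
  fixes X Y a b h M :: real
  assumes ab: "a\<^sup>2 + b\<^sup>2 = 1" and X: "\<bar>X - h * a\<bar> \<le> M * h\<^sup>2" and Y: "\<bar>Y - h * b\<bar> \<le> M * h\<^sup>2"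
    and "0 \<le> M" and Mh: "M * \<bar>h\<bar> \<le> 1 / 16"
  shows "h\<^sup>2 / 2 \<le> h * (X * a + Y * b)" and "h\<^sup>2 / 4 \<le> X\<^sup>2 + Y\<^sup>2"
proof -
  have "a\<^sup>2 \<le> 1" "b\<^sup>2 \<le> 1"
    using ab zero_le_power2[of a] zero_le_power2[of b] by linarith+
  then have "\<bar>a\<bar> \<le> 1" "\<bar>b\<bar> \<le> 1"
    by (simp_all flip: abs_square_le_1)
  then have "\<bar>(X - h * a) * a\<bar> \<le> M * h\<^sup>2" "\<bar>(Y - h * b) * b\<bar> \<le> M * h\<^sup>2"
    using X Y by (auto simp: abs_mult intro: order_trans[OF mult_left_le])
  moreover have "X * a + Y * b - h = (X - h * a) * a + (Y - h * b) * b"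
    using ab by algebra
  ultimately have "\<bar>X * a + Y * b - h\<bar> \<le> 2 * (M * \<bar>h\<bar>) * \<bar>h\<bar>"
    by (simp add: power2_eq_square abs_mult_self_eq mult.assoc)
  also have "\<dots> \<le> \<bar>h\<bar> / 8"
    using mult_right_mono[OF Mh abs_ge_zero[of h]] by linarith
  finally have P: "\<bar>X * a + Y * b - h\<bar> \<le> \<bar>h\<bar> / 8" .
  have "h * (X * a + Y * b) = h\<^sup>2 + h * (X * a + Y * b - h)"
    by (simp add: algebra_simps power2_eq_square)
  moreover have "\<bar>h * (X * a + Y * b - h)\<bar> \<le> h\<^sup>2 / 8"
    using mult_left_mono[OF P abs_ge_zero[of h]] by (simp add: abs_mult power2_eq_square)
  ultimately show "h\<^sup>2 / 2 \<le> h * (X * a + Y * b)"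
    using abs_le_D2 zero_le_power2[of h] by fastforce
  have "\<bar>h\<bar> / 2 \<le> \<bar>X * a + Y * b\<bar>"
    using P by linarith
  then have "h\<^sup>2 / 4 \<le> (X * a + Y * b)\<^sup>2"
    using power_mono[of "\<bar>h\<bar> / 2" "\<bar>X * a + Y * b\<bar>" 2] by (simp add: power_divide)
  moreover have "X\<^sup>2 + Y\<^sup>2 = (X * a + Y * b)\<^sup>2 + (X * b - Y * a)\<^sup>2"
    using ab by algebra
  ultimately show "h\<^sup>2 / 4 \<le> X\<^sup>2 + Y\<^sup>2"
    by (smt (verit) zero_le_power2)
qed

section \<open>Legendrian curves and the Koranyi gauge\<close>

locale legendrian_curve =
  fixes x y u :: "real \<Rightarrow> real"
  assumes smooth_x: "smooth_real x" and smooth_y: "smooth_real y" and smooth_u: "smooth_real u"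
    and horizontal: "\<And>s. deriv u s = (x s * deriv y s - deriv x s * y s) / 2"
    and unit_speed: "\<And>s. (deriv x s)\<^sup>2 + (deriv y s)\<^sup>2 = 1"
begin

definition curve :: "real \<Rightarrow> heis" where
  "curve s = (x s, y s, u s)"

text \<open>By the group law, (incr_x s0 h, incr_y s0 h, incr_u s0 h) = (curve s0)\<inverse> \<cdot> curve (s0 + h).\<close>

definition incr_x :: "real \<Rightarrow> real \<Rightarrow> real" where
  "incr_x s\<^sub>0 h = x (s\<^sub>0 + h) - x s\<^sub>0"

definition incr_y :: "real \<Rightarrow> real \<Rightarrow> real" where
  "incr_y s\<^sub>0 h = y (s\<^sub>0 + h) - y s\<^sub>0"

definition incr_u :: "real \<Rightarrow> real \<Rightarrow> real" where
  "incr_u s\<^sub>0 h = u (s\<^sub>0 + h) - u s\<^sub>0 + (x (s\<^sub>0 + h) * y s\<^sub>0 - x s\<^sub>0 * y (s\<^sub>0 + h)) / 2"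

definition gauge4 :: "real \<Rightarrow> real \<Rightarrow> real" where
  "gauge4 s\<^sub>0 h = ((incr_x s\<^sub>0 h)\<^sup>2 + (incr_y s\<^sub>0 h)\<^sup>2)\<^sup>2 + 16 * (incr_u s\<^sub>0 h)\<^sup>2"

lemma koranyi_dist_curve: "koranyi_dist (curve s\<^sub>0) (curve (s\<^sub>0 + h)) = root 4 (gauge4 s\<^sub>0 h)"
  by (simp add: koranyi_dist_def heis_mult_def heis_inv_def koranyi_norm_def curve_def gauge4_def
      incr_x_def incr_y_def incr_u_def algebra_simps)

lemma gauge4_at_0: "gauge4 s\<^sub>0 0 = 0"
  by (simp add: gauge4_def incr_x_def incr_y_def incr_u_def)

lemma incr_x_DERIV: "(incr_x s\<^sub>0 has_real_derivative deriv x (s\<^sub>0 + h)) (at h)"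
  unfolding incr_x_def[abs_def]
  using DERIV_diff[OF smooth_real_shift_DERIV[OF smooth_x] DERIV_const] by simp

lemma incr_y_DERIV: "(incr_y s\<^sub>0 has_real_derivative deriv y (s\<^sub>0 + h)) (at h)"
  unfolding incr_y_def[abs_def]
  using DERIV_diff[OF smooth_real_shift_DERIV[OF smooth_y] DERIV_const] by simp

text \<open>Horizontality leaves only increments in this derivative; as incr_x s0 h \<approx> h x' and
  incr_y s0 h \<approx> h y', it is O(h^2).\<close>
lemma incr_u_DERIV:
  "(incr_u s\<^sub>0 has_real_derivative
     (incr_x s\<^sub>0 h * deriv y (s\<^sub>0 + h) - deriv x (s\<^sub>0 + h) * incr_y s\<^sub>0 h) / 2) (at h)"
proof -
  note x' = smooth_real_shift_DERIV[OF smooth_x] and y' = smooth_real_shift_DERIV[OF smooth_y]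
    and u' = smooth_real_shift_DERIV[OF smooth_u]
  have "(incr_u s\<^sub>0 has_real_derivative deriv u (s\<^sub>0 + h) - 0
      + (deriv x (s\<^sub>0 + h) * y s\<^sub>0 - x s\<^sub>0 * deriv y (s\<^sub>0 + h)) / 2) (at h)"
    unfolding incr_u_def[abs_def]
    by (rule DERIV_add[OF DERIV_diff[OF u' DERIV_const]
          DERIV_cdivide[OF DERIV_diff[OF DERIV_cmult_right[OF x'] DERIV_cmult[OF y']]]])
  then show ?thesis
    by (simp add: horizontal incr_x_def incr_y_def diff_divide_distrib add_divide_distrib
        algebra_simps)
qed

lemma smooth_real_incr_u: "smooth_real (incr_u s\<^sub>0)"
  unfolding incr_u_def[abs_def]
  by (intro smooth_real_intros smooth_real_shift[OF smooth_x] smooth_real_shift[OF smooth_y]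
      smooth_real_shift[OF smooth_u])

lemma incr_u_factor:
  obtains C where "smooth_real C" "\<And>h. incr_u s\<^sub>0 h = h ^ 3 * C h"
proof -
  obtain A where A: "smooth_real A" "A 0 = deriv x s\<^sub>0" "\<And>h. incr_x s\<^sub>0 h = h * A h"
    using smooth_real_increment_factor[OF smooth_x] unfolding incr_x_def by metis
  obtain B where B: "smooth_real B" "B 0 = deriv y s\<^sub>0" "\<And>h. incr_y s\<^sub>0 h = h * B h"
    using smooth_real_increment_factor[OF smooth_y] unfolding incr_y_def by metis
  define D where "D h = (A h * deriv y (s\<^sub>0 + h) - deriv x (s\<^sub>0 + h) * B h) / 2" for h
  have "smooth_real D"
    unfolding D_def
    by (intro smooth_real_intros A(1) B(1) smooth_real_shift[OF smooth_real_deriv[OF smooth_x]]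
        smooth_real_shift[OF smooth_real_deriv[OF smooth_y]])
  then obtain E where E: "smooth_real E" "\<And>h. D (0 + h) - D 0 = h * E h"
    using smooth_real_increment_factor by metis
  have "D 0 = 0"
    by (simp add: D_def A B)
  have incr_u': "deriv (incr_u s\<^sub>0) h = h ^ 2 * E h" for h
  proof -
    have "deriv (incr_u s\<^sub>0) h
        = (incr_x s\<^sub>0 h * deriv y (s\<^sub>0 + h) - deriv x (s\<^sub>0 + h) * incr_y s\<^sub>0 h) / 2"
      by (rule DERIV_imp_deriv[OF incr_u_DERIV])
    also have "\<dots> = h * D h"
      by (simp add: A(3) B(3) D_def algebra_simps)
    also have "\<dots> = h ^ 2 * E h"
      using E(2)[of h] \<open>D 0 = 0\<close> by (simp add: power2_eq_square)
    finally show ?thesis .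
  qed
  have "incr_u s\<^sub>0 h = h ^ Suc 2 * hadamard_integral 2 E h" for h
    by (rule hadamard_lemma[OF smooth_real_incr_u _ smooth_real_continuous_on[OF E(1)] incr_u'])
      (simp add: incr_u_def)
  with E(1) show thesis
    by (intro that[of "hadamard_integral 2 E"] smooth_real_hadamard_integral) simp_all
qed

lemma gauge4_factor:
  obtains \<phi> where "smooth_real \<phi>" "\<phi> 0 = 1" "\<And>h. gauge4 s\<^sub>0 h = h ^ 4 * \<phi> h"
proof -
  obtain A where A: "smooth_real A" "A 0 = deriv x s\<^sub>0" "\<And>h. incr_x s\<^sub>0 h = h * A h"
    using smooth_real_increment_factor[OF smooth_x] unfolding incr_x_def by metis
  obtain B where B: "smooth_real B" "B 0 = deriv y s\<^sub>0" "\<And>h. incr_y s\<^sub>0 h = h * B h"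
    using smooth_real_increment_factor[OF smooth_y] unfolding incr_y_def by metis
  obtain C where C: "smooth_real C" "\<And>h. incr_u s\<^sub>0 h = h ^ 3 * C h"
    using incr_u_factor by metis
  show thesis
  proof
    show "smooth_real (\<lambda>h. ((A h)\<^sup>2 + (B h)\<^sup>2)\<^sup>2 + 16 * h\<^sup>2 * (C h)\<^sup>2)"
      by (intro smooth_real_intros A(1) B(1) C(1))
    show "((A 0)\<^sup>2 + (B 0)\<^sup>2)\<^sup>2 + 16 * 0\<^sup>2 * (C 0)\<^sup>2 = 1"
      by (simp add: A(2) B(2) unit_speed)
    show "gauge4 s\<^sub>0 h = h ^ 4 * (((A h)\<^sup>2 + (B h)\<^sup>2)\<^sup>2 + 16 * h\<^sup>2 * (C h)\<^sup>2)" for h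
      unfolding gauge4_def A(3) B(3) C(2) by algebra
  qed
qed

lemma abs_deriv_x_le_1: "\<bar>deriv x s\<bar> \<le> 1"
proof -
  have "(deriv x s)\<^sup>2 \<le> 1"
    using unit_speed[of s] zero_le_power2[of "deriv y s"] by linarith
  then show ?thesis
    by (simp flip: abs_square_le_1)
qed

lemma abs_deriv_y_le_1: "\<bar>deriv y s\<bar> \<le> 1"
proof -
  have "(deriv y s)\<^sup>2 \<le> 1"
    using unit_speed[of s] zero_le_power2[of "deriv x s"] by linarith
  then show ?thesis
    by (simp flip: abs_square_le_1)
qed

lemma gauge4_DERIV:
  "(gauge4 s\<^sub>0 has_real_derivative
     4 * ((incr_x s\<^sub>0 h)\<^sup>2 + (incr_y s\<^sub>0 h)\<^sup>2)
       * (incr_x s\<^sub>0 h * deriv x (s\<^sub>0 + h) + incr_y s\<^sub>0 h * deriv y (s\<^sub>0 + h))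
     + 32 * incr_u s\<^sub>0 h
       * ((incr_x s\<^sub>0 h * deriv y (s\<^sub>0 + h) - deriv x (s\<^sub>0 + h) * incr_y s\<^sub>0 h) / 2))
   (at h)"
  unfolding gauge4_def[abs_def]
  by (rule DERIV_cong, (rule derivative_eq_intros incr_x_DERIV incr_y_DERIV incr_u_DERIV refl)+)
    (simp add: field_simps power2_eq_square)

lemma continuous_on_curve: "continuous_on S curve"
  unfolding curve_def[abs_def]
  by (intro continuous_on_Pair smooth_real_continuous_on smooth_x smooth_y smooth_u)

end

locale bounded_legendrian_curve = legendrian_curve +
  fixes M :: real
  assumes x''_bound: "\<And>s. \<bar>deriv (deriv x) s\<bar> \<le> M"
    and y''_bound: "\<And>s. \<bar>deriv (deriv y) s\<bar> \<le> M"

begin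

lemma M_nonneg: "0 \<le> M"
  using x''_bound[of 0] by linarith

lemma incr_x_error: "\<bar>incr_x s\<^sub>0 h - h * deriv x (s\<^sub>0 + h)\<bar> \<le> M * h\<^sup>2"
  using smooth_real_increment_deriv_error[OF smooth_x x''_bound] by (simp add: incr_x_def)

lemma incr_y_error: "\<bar>incr_y s\<^sub>0 h - h * deriv y (s\<^sub>0 + h)\<bar> \<le> M * h\<^sup>2"
  using smooth_real_increment_deriv_error[OF smooth_y y''_bound] by (simp add: incr_y_def)

lemma incr_xy_estimates:
  assumes "M * \<bar>h\<bar> \<le> 1 / 16"
  shows "h\<^sup>2 / 2 \<le> h * (incr_x s\<^sub>0 h * deriv x (s\<^sub>0 + h) + incr_y s\<^sub>0 h * deriv y (s\<^sub>0 + h))"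
    and "h\<^sup>2 / 4 \<le> (incr_x s\<^sub>0 h)\<^sup>2 + (incr_y s\<^sub>0 h)\<^sup>2"
  using unit_vector_perturbation_estimates[OF unit_speed incr_x_error incr_y_error M_nonneg assms]
  by (simp_all add: mult.commute)

lemma abs_incr_u_deriv_le:
  "\<bar>(incr_x s\<^sub>0 h * deriv y (s\<^sub>0 + h) - deriv x (s\<^sub>0 + h) * incr_y s\<^sub>0 h) / 2\<bar> \<le> M * h\<^sup>2"
proof -
  have "incr_x s\<^sub>0 h * deriv y (s\<^sub>0 + h) - deriv x (s\<^sub>0 + h) * incr_y s\<^sub>0 h
      = (incr_x s\<^sub>0 h - h * deriv x (s\<^sub>0 + h)) * deriv y (s\<^sub>0 + h)
        - deriv x (s\<^sub>0 + h) * (incr_y s\<^sub>0 h - h * deriv y (s\<^sub>0 + h))"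
    by (simp add: algebra_simps)
  also have "\<bar>\<dots>\<bar> \<le> \<bar>(incr_x s\<^sub>0 h - h * deriv x (s\<^sub>0 + h)) * deriv y (s\<^sub>0 + h)\<bar>
      + \<bar>deriv x (s\<^sub>0 + h) * (incr_y s\<^sub>0 h - h * deriv y (s\<^sub>0 + h))\<bar>"
    by (rule abs_triangle_ineq4)
  also have "\<dots> \<le> M * h\<^sup>2 + M * h\<^sup>2"
    using incr_x_error incr_y_error abs_deriv_x_le_1 abs_deriv_y_le_1
    by (intro add_mono)
      (auto simp: abs_mult intro: order_trans[OF mult_left_le] order_trans[OF mult_left_le_one_le])
  finally show ?thesis
    by simp
qed

lemma abs_incr_u_le: "\<bar>incr_u s\<^sub>0 h\<bar> \<le> M * \<bar>h\<bar> ^ 3"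
proof -
  have "\<bar>(incr_x s\<^sub>0 t * deriv y (s\<^sub>0 + t) - deriv x (s\<^sub>0 + t) * incr_y s\<^sub>0 t) / 2\<bar> \<le> M * h\<^sup>2"
    if "t \<in> closed_segment 0 h" for t
  proof -
    have "t\<^sup>2 \<le> h\<^sup>2"
      using dist_in_closed_segment[OF that] by (simp add: dist_real_def abs_le_square_iff)
    then show ?thesis
      using abs_incr_u_deriv_le[of s\<^sub>0 t] M_nonneg by (smt (verit) mult_left_mono)
  qed
  from abs_diff_le_DERIV_bound[where a = 0 and b = h, OF incr_u_DERIV this]
  show ?thesis
    by (simp add: incr_u_def power2_eq_square power3_eq_cube abs_mult_self_eq mult.assoc)
qed

lemma gauge4_lower_bound:
  assumes "M * \<bar>h\<bar> \<le> 1 / 16"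
  shows "h ^ 4 / 16 \<le> gauge4 s\<^sub>0 h"
proof -
  have "(h\<^sup>2 / 4)\<^sup>2 \<le> ((incr_x s\<^sub>0 h)\<^sup>2 + (incr_y s\<^sub>0 h)\<^sup>2)\<^sup>2"
    using incr_xy_estimates(2)[OF assms] by (intro power_mono) simp_all
  then show ?thesis
    unfolding gauge4_def by (simp add: power_divide) (smt (verit) zero_le_power2)
qed

text \<open>In h * gauge4' the horizontal part contributes at least h^4/2, the vertical part at most
  h^4/8 in absolute value.\<close>
lemma gauge4_deriv_sign:
  assumes "h \<noteq> 0" and Mh: "M * \<bar>h\<bar> \<le> 1 / 16"
  shows "0 < h * deriv (gauge4 s\<^sub>0) h"
proof -
  define S P U U' where "S = (incr_x s\<^sub>0 h)\<^sup>2 + (incr_y s\<^sub>0 h)\<^sup>2"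
    and "P = incr_x s\<^sub>0 h * deriv x (s\<^sub>0 + h) + incr_y s\<^sub>0 h * deriv y (s\<^sub>0 + h)"
    and "U = incr_u s\<^sub>0 h"
    and "U' = (incr_x s\<^sub>0 h * deriv y (s\<^sub>0 + h) - deriv x (s\<^sub>0 + h) * incr_y s\<^sub>0 h) / 2"
  have "deriv (gauge4 s\<^sub>0) h = 4 * S * P + 32 * U * U'"
    unfolding S_def P_def U_def U'_def by (rule DERIV_imp_deriv[OF gauge4_DERIV])
  then have "h * deriv (gauge4 s\<^sub>0) h = 4 * (S * (h * P)) + 32 * (h * U * U')"
    by (simp add: algebra_simps)
  moreover have "h ^ 4 / 8 \<le> S * (h * P)"
  proof -
    have "(h\<^sup>2 / 4) * (h\<^sup>2 / 2) \<le> S * (h * P)"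
      using incr_xy_estimates[OF Mh] by (intro mult_mono) (simp_all add: S_def P_def)
    then show ?thesis
      by (simp add: power2_eq_square power4_eq_xxxx)
  qed
  moreover have "- (h * U * U') \<le> h ^ 4 / 256"
  proof -
    have "\<bar>h * U * U'\<bar> \<le> \<bar>h\<bar> * (M * \<bar>h\<bar> ^ 3) * (M * h\<^sup>2)"
      unfolding U_def U'_def abs_mult
      by (intro mult_mono mult_left_mono abs_incr_u_le abs_incr_u_deriv_le) (simp_all add: M_nonneg)
    also have "\<dots> = (M * \<bar>h\<bar>)\<^sup>2 * h ^ 4"
      by (simp add: power2_eq_square power3_eq_cube power4_eq_xxxx abs_mult_self_eq algebra_simps)
    also have "\<dots> \<le> (1 / 16)\<^sup>2 * h ^ 4"
      using Mh M_nonneg by (intro mult_right_mono power_mono) simp_all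
    finally show ?thesis
      by (simp add: power2_eq_square abs_le_iff)
  qed
  moreover have "0 < h ^ 4"
    using \<open>h \<noteq> 0\<close> by simp
  ultimately show ?thesis
    by linarith
qed

lemma gauge_lower_bound:
  assumes "M * \<bar>h\<bar> \<le> 1 / 16"
  shows "\<bar>h\<bar> / 2 \<le> root 4 (gauge4 s\<^sub>0 h)"
proof -
  have "\<bar>h\<bar> / 2 = root 4 ((\<bar>h\<bar> / 2) ^ 4)"
    by (simp add: real_root_power_cancel)
  also have "\<dots> \<le> root 4 (gauge4 s\<^sub>0 h)"
    using gauge4_lower_bound[OF assms] by (simp add: power_divide power_even_abs)
  finally show ?thesis .
qed

lemma gauge4_factor_pos:
  assumes "M * \<rho> \<le> 1 / 16"
  obtains \<phi> where "smooth_real \<phi>" "\<phi> 0 = 1" "\<And>h. gauge4 s\<^sub>0 h = h ^ 4 * \<phi> h"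
    and "\<And>h. h \<in> {-\<rho><..<\<rho>} \<Longrightarrow> 0 < \<phi> h"
proof -
  obtain \<phi> where \<phi>: "smooth_real \<phi>" "\<phi> 0 = 1" "\<And>h. gauge4 s\<^sub>0 h = h ^ 4 * \<phi> h"
    using gauge4_factor by metis
  have "0 < \<phi> h" if "h \<in> {-\<rho><..<\<rho>}" for h
  proof (cases "h = 0")
    case False
    have "M * \<bar>h\<bar> \<le> 1 / 16"
      using that assms M_nonneg mult_left_mono[of "\<bar>h\<bar>" \<rho> M] by force
    with False show ?thesis
      using gauge4_lower_bound[of h s\<^sub>0] by (simp add: \<phi>(3) field_simps)
  qed (simp add: \<phi>(2))
  with \<phi> show thesis
    using that by blast
qed

text \<open>The chart is r h = h * root 4 (\<phi> h), where gauge4 s0 h = h^4 * \<phi> h.\<close>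
lemma gauge4_chart:
  assumes "M * \<rho> \<le> 1 / 16"
  obtains r where "\<And>n. derivs_differentiable_on n {-\<rho><..<\<rho>} r"
    and "\<And>h. h \<in> {-\<rho><..<\<rho>} \<Longrightarrow> 0 < deriv r h" and "r 0 = 0"
    and "\<And>h. h \<in> {-\<rho><..<\<rho>} \<Longrightarrow> root 4 (gauge4 s\<^sub>0 h) = \<bar>r h\<bar>"
proof -
  define I where "I = {-\<rho><..<\<rho>}"
  obtain \<phi> where \<phi>: "smooth_real \<phi>" "\<phi> 0 = 1" "\<And>h. gauge4 s\<^sub>0 h = h ^ 4 * \<phi> h"
    and \<phi>_pos: "\<And>h. h \<in> I \<Longrightarrow> 0 < \<phi> h"
    using gauge4_factor_pos[OF assms] unfolding I_def by metis
  have Mh: "M * \<bar>h\<bar> \<le> 1 / 16" if "h \<in> I" for h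
    using that assms M_nonneg mult_left_mono[of "\<bar>h\<bar>" \<rho> M] by (force simp: I_def)
  define g where "g h = root 4 (\<phi> h)" for h
  have g_smooth: "derivs_differentiable_on n I g" for n
    unfolding g_def
    by (rule derivs_differentiable_on_compose[OF _ _ smooth_real_derivs_differentiable_on[OF \<phi>(1)]
          derivs_differentiable_on_root]) (use \<phi>_pos in \<open>auto simp: I_def\<close>)
  define r where "r h = h * g h" for h
  have r_smooth: "derivs_differentiable_on n I r" for n
    unfolding r_def[abs_def]
    by (rule derivs_differentiable_on_mult[OF _ derivs_differentiable_on_ident g_smooth])
      (simp add: I_def)
  have r4: "r h ^ 4 = gauge4 s\<^sub>0 h" if "h \<in> I" for h
    using \<phi>_pos[OF that] by (simp add: r_def g_def \<phi>(3) power_mult_distrib)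
  have r'_pos: "0 < deriv r h" if "h \<in> I" for h
  proof (cases "h = 0")
    case True
    have "(r has_real_derivative 1 * g 0 + deriv g 0 * 0) (at 0)"
      unfolding r_def[abs_def]
      by (rule DERIV_mult[OF DERIV_ident derivs_differentiable_on_DERIV[OF g_smooth]])
        (use that True in simp)
    then show ?thesis
      using True by (simp add: DERIV_imp_deriv g_def \<phi>(2))
  next
    case False
    have gauge4': "(gauge4 s\<^sub>0 has_real_derivative deriv (gauge4 s\<^sub>0) h) (at h)"
      using gauge4_DERIV by (metis DERIV_imp_deriv)
    have hr: "0 < h * r h"
    proof -
      have "0 < h * h"
        using False by (metis not_real_square_gt_zero)
      then show ?thesis
        using \<phi>_pos[OF that] by (simp add: r_def g_def mult.assoc[symmetric])
    qed
    show ?thesis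
      by (rule deriv_pos_of_fourth_power[OF _ that r4 derivs_differentiable_on_DERIV[OF r_smooth that]
            gauge4' gauge4_deriv_sign[OF False Mh[OF that]] hr]) (simp add: I_def)
  qed
  have "root 4 (gauge4 s\<^sub>0 h) = \<bar>r h\<bar>" if "h \<in> I" for h
    by (rule real_root_pos_unique) (simp_all add: r4[OF that, symmetric] power_even_abs)
  with r_smooth r'_pos show thesis
    by (intro that[of r]) (simp_all add: I_def r_def)
qed

lemma gauge4_local_inverse:
  assumes "0 < \<delta>" and M\<delta>: "M * (2 * \<delta>) \<le> 1 / 16"
  obtains ri where "\<And>n. derivs_differentiable_on n {-\<delta>/2<..<\<delta>/2} ri"
    and "\<And>t. t \<in> {-\<delta>/2<..<\<delta>/2} \<Longrightarrow> ri t \<in> {-\<delta><..<\<delta>}"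
    and "\<And>t h. t \<in> {0<..<\<delta>/2} \<Longrightarrow> h \<in> {-\<delta>..\<delta>} \<Longrightarrow>
           root 4 (gauge4 s\<^sub>0 h) < t \<longleftrightarrow> ri (-t) < h \<and> h < ri t"
proof -
  define I where "I = {-(2 * \<delta>)<..<2 * \<delta>}"
  obtain r where r: "\<And>n. derivs_differentiable_on n I r" "\<And>h. h \<in> I \<Longrightarrow> 0 < deriv r h"
    "r 0 = 0" "\<And>h. h \<in> I \<Longrightarrow> root 4 (gauge4 s\<^sub>0 h) = \<bar>r h\<bar>"
    using gauge4_chart[OF M\<delta>] unfolding I_def by metis
  have mono: "strict_mono_on I r"
    unfolding I_def using derivs_differentiable_on_DERIV[OF r(1)] r(2)
    by (rule deriv_pos_imp_strict_mono_on[unfolded I_def]) (simp_all add: I_def)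
  obtain ri where ri: "\<And>n. derivs_differentiable_on n {r (-\<delta>)<..<r \<delta>} ri"
    "\<And>t. t \<in> {r (-\<delta>)<..<r \<delta>} \<Longrightarrow> ri t \<in> {-\<delta><..<\<delta>} \<and> r (ri t) = t"
    using smooth_strict_mono_inverse[of "-(2 * \<delta>)" "2 * \<delta>" r "-\<delta>" \<delta>] r(1,2) \<open>0 < \<delta>\<close>
    unfolding I_def by auto
  have in_I: "h \<in> I" if "h \<in> {-\<delta>..\<delta>}" for h
    using that \<open>0 < \<delta>\<close> by (auto simp: I_def)
  have "M * \<bar>\<delta>\<bar> \<le> 1 / 16"
    using M\<delta> M_nonneg \<open>0 < \<delta>\<close> by (smt (verit) mult_left_mono)
  then have gauge_\<delta>: "\<delta> / 2 \<le> root 4 (gauge4 s\<^sub>0 \<delta>)" "\<delta> / 2 \<le> root 4 (gauge4 s\<^sub>0 (-\<delta>))"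
    using gauge_lower_bound[of \<delta>] gauge_lower_bound[of "-\<delta>"] \<open>0 < \<delta>\<close> by auto
  have "r (-\<delta>) < r 0" "r 0 < r \<delta>"
    using \<open>0 < \<delta>\<close> in_I by (auto intro!: strict_mono_onD[OF mono])
  then have J: "{-\<delta>/2<..<\<delta>/2} \<subseteq> {r (-\<delta>)<..<r \<delta>}"
    using gauge_\<delta> r(3) r(4)[OF in_I] \<open>0 < \<delta>\<close> by auto
  show thesis
  proof
    show "derivs_differentiable_on n {-\<delta>/2<..<\<delta>/2} ri" for n
      using ri(1) J by (rule derivs_differentiable_on_subset)
    show "ri t \<in> {-\<delta><..<\<delta>}" if "t \<in> {-\<delta>/2<..<\<delta>/2}" for t
      using ri(2) J that by blast
  next
    fix t h assume t: "t \<in> {0<..<\<delta>/2}" and h: "h \<in> {-\<delta>..\<delta>}"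
    then have "t \<in> {-\<delta>/2<..<\<delta>/2}" "-t \<in> {-\<delta>/2<..<\<delta>/2}"
      by auto
    then have "t \<in> {r (-\<delta>)<..<r \<delta>}" "-t \<in> {r (-\<delta>)<..<r \<delta>}"
      using J by blast+
    then have ri_t: "ri t \<in> I" "r (ri t) = t" and ri_mt: "ri (-t) \<in> I" "r (ri (-t)) = -t"
      using ri(2)[of t] ri(2)[of "-t"] in_I[of "ri t"] in_I[of "ri (-t)"] by auto
    have "root 4 (gauge4 s\<^sub>0 h) < t \<longleftrightarrow> r (ri (-t)) < r h \<and> r h < r (ri t)"
      using r(4)[OF in_I[OF h]] ri_t ri_mt by auto
    also have "\<dots> \<longleftrightarrow> ri (-t) < h \<and> h < ri t"
      using strict_mono_on_less[OF mono] ri_t(1) ri_mt(1) in_I[OF h] by simp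
    finally show "root 4 (gauge4 s\<^sub>0 h) < t \<longleftrightarrow> ri (-t) < h \<and> h < ri t" .
  qed
qed

end

section \<open>Periodic curves and arc length in Koranyi balls\<close>

lemma floor_reduce_in_period:
  fixes s L :: real
  shows "0 < L \<Longrightarrow> s - of_int \<lfloor>s / L\<rfloor> * L \<in> {0..<L}"
  using floor_divide_lower[of L s] floor_divide_upper[of L s] by (simp add: algebra_simps)

lemma periodic_reduce:
  fixes f :: "real \<Rightarrow> 'a"
  assumes "\<And>s. f (s + L) = f s"
  shows "f s = f (s - of_int \<lfloor>s / L\<rfloor> * L)"
proof -
  interpret periodic_fun_simple f L
    by unfold_locales (rule assms)
  show ?thesis
    using plus_of_int[of "s - of_int \<lfloor>s / L\<rfloor> * L" "\<lfloor>s / L\<rfloor>"] by simp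
qed

lemma deriv_periodic: "(\<And>s. f (s + L) = f s) \<Longrightarrow> deriv f (s + L) = deriv f s"
  by (simp add: deriv_def DERIV_shift)

lemma periodic_continuous_bounded:
  fixes f :: "real \<Rightarrow> real"
  assumes "\<And>s. f (s + L) = f s" "0 < L" and "continuous_on UNIV f"
  obtains B where "\<And>s. \<bar>f s\<bar> \<le> B"
proof -
  have "compact (f ` {0..L})"
    by (rule compact_continuous_image[OF continuous_on_subset[OF assms(3)]]) auto
  then obtain B where B: "\<And>s. s \<in> {0..L} \<Longrightarrow> \<bar>f s\<bar> \<le> B"
    by (meson compact_imp_bounded bounded_real image_eqI)
  show thesis
  proof
    fix s
    show "\<bar>f s\<bar> \<le> B"
      using periodic_reduce[of f L s] floor_reduce_in_period[of L s] assms B by fastforce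
  qed
qed

lemma periodic_inj_on_neq:
  fixes \<gamma> :: "real \<Rightarrow> 'a"
  assumes "\<And>s. \<gamma> (s + L) = \<gamma> s" "0 < L" and inj: "inj_on \<gamma> {0..<L}" and "0 < s' - s" "s' - s < L"
  shows "\<gamma> s \<noteq> \<gamma> s'"
proof
  assume "\<gamma> s = \<gamma> s'"
  then have "s - of_int \<lfloor>s / L\<rfloor> * L = s' - of_int \<lfloor>s' / L\<rfloor> * L"
    using periodic_reduce[of \<gamma> L] floor_reduce_in_period[OF \<open>0 < L\<close>] assms(1)
    by (metis inj_onD[OF inj])
  then have "s' - s = of_int (\<lfloor>s' / L\<rfloor> - \<lfloor>s / L\<rfloor>) * L"
    by (simp add: algebra_simps)
  with assms(4,5) have "0 < of_int (\<lfloor>s' / L\<rfloor> - \<lfloor>s / L\<rfloor>) * L"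
    "of_int (\<lfloor>s' / L\<rfloor> - \<lfloor>s / L\<rfloor>) * L < 1 * L"
    by simp_all
  with \<open>0 < L\<close> have "0 < real_of_int (\<lfloor>s' / L\<rfloor> - \<lfloor>s / L\<rfloor>)"
    "real_of_int (\<lfloor>s' / L\<rfloor> - \<lfloor>s / L\<rfloor>) < 1"
    by (metis zero_less_mult_pos2, metis mult_less_cancel_right_pos)
  then show False
    by simp
qed

lemma fmeasurable_Collect_atLeastLessThan:
  fixes Q :: "real \<Rightarrow> bool"
  assumes "{s. Q s} \<in> sets lebesgue"
  shows "{s \<in> {a..<b}. Q s} \<in> fmeasurable lebesgue"
proof (rule bounded_set_imp_lmeasurable)
  show "bounded {s \<in> {a..<b}. Q s}"
    by (rule bounded_subset[of "{a..b}"]) auto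
  have "{a..<b} \<in> sets lebesgue"
    using atLeastLessThan_borel[of a b] by (simp add: sets_completionI_sets)
  moreover have "{s \<in> {a..<b}. Q s} = {a..<b} \<inter> {s. Q s}"
    by auto
  ultimately show "{s \<in> {a..<b}. Q s} \<in> sets lebesgue"
    using assms by (metis sets.Int)
qed

lemma measure_periodic_window_shift:
  fixes Q :: "real \<Rightarrow> bool"
  assumes periodic: "\<And>s. Q (s + L) = Q s" and meas: "{s. Q s} \<in> sets lebesgue"
    and "0 \<le> d" "d \<le> L"
  shows "measure lebesgue {s \<in> {c + d..<c + d + L}. Q s} = measure lebesgue {s \<in> {c..<c + L}. Q s}"
proof -
  define A B where "A = {s \<in> {c..<c + d}. Q s}" and "B = {s \<in> {c + d..<c + L}. Q s}"
  have "s \<in> (+) L ` A \<longleftrightarrow> s - L \<in> A" for s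
    by (auto intro: image_eqI[of _ _ "s - L"])
  then have "s \<in> (+) L ` A \<longleftrightarrow> s \<in> {c + L..<c + d + L} \<and> Q s" for s
    using periodic[of "s - L"] by (auto simp: A_def)
  then have window: "{s \<in> {c + d..<c + d + L}. Q s} = B \<union> (+) L ` A"
    using assms(3,4) by (auto simp: A_def B_def)
  have fmeas: "A \<in> fmeasurable lebesgue" "B \<in> fmeasurable lebesgue"
    "(+) L ` A \<in> fmeasurable lebesgue"
    using fmeasurable_Collect_atLeastLessThan[OF meas] measurable_translation
    by (auto simp: A_def B_def)
  have disjoint: "A \<inter> B = {}" "B \<inter> (+) L ` A = {}"
    using assms(3,4) by (auto simp: A_def B_def)
  have "measure lebesgue (B \<union> (+) L ` A) = measure lebesgue B + measure lebesgue A"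
    using measure_Un3[OF fmeas(2,3)] measure_translation[of L A] disjoint by simp
  also have "\<dots> = measure lebesgue (A \<union> B)"
    using measure_Un3[OF fmeas(1,2)] disjoint by simp
  also have "A \<union> B = {s \<in> {c..<c + L}. Q s}"
    using assms(3,4) by (auto simp: A_def B_def)
  finally show ?thesis
    unfolding window .
qed

lemma measure_periodic_window:
  fixes Q :: "real \<Rightarrow> bool"
  assumes periodic: "\<And>s. Q (s + L) = Q s" and "0 < L" and meas: "{s. Q s} \<in> sets lebesgue"
  shows "measure lebesgue {s \<in> {c..<c + L}. Q s} = measure lebesgue {s \<in> {0..<L}. Q s}"
proof -
  define W where "W c = measure lebesgue {s \<in> {c..<c + L}. Q s}" for c
  note shift = measure_periodic_window_shift[OF periodic meas, folded W_def]
  interpret periodic_fun_simple W L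
    by unfold_locales (use shift[where d = L] \<open>0 < L\<close> in auto)
  define c' where "c' = c - of_int \<lfloor>c / L\<rfloor> * L"
  have "W c = W c'"
    using plus_of_int[of c' "\<lfloor>c / L\<rfloor>"] by (simp add: c'_def)
  also have "\<dots> = W (0 + c')"
    by simp
  also have "\<dots> = W 0"
    using shift[where c = 0 and d = c'] floor_reduce_in_period[OF \<open>0 < L\<close>, of c] by (simp add:
        c'_def)
  finally show ?thesis
    by (simp add: W_def)
qed

lemma koranyi_dist_nonneg: "0 \<le> koranyi_dist p q"
  by (simp add: koranyi_dist_def koranyi_norm_def case_prod_unfold)

lemma koranyi_dist_eq_0_iff: "koranyi_dist p q = 0 \<longleftrightarrow> p = q"
  by (cases p; cases q) (auto simp: koranyi_dist_def koranyi_norm_def heis_mult_def heis_inv_def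
      add_nonneg_eq_0_iff)

lemma continuous_on_koranyi_dist [continuous_intros]:
  "continuous_on S f \<Longrightarrow> continuous_on S g \<Longrightarrow> continuous_on S (\<lambda>z. koranyi_dist (f z) (g z))"
  unfolding koranyi_dist_def koranyi_norm_def heis_mult_def heis_inv_def case_prod_unfold
  by (intro continuous_intros) auto

lemma periodic_curve_koranyi_separated:
  fixes \<gamma> :: "real \<Rightarrow> heis"
  assumes cont: "continuous_on UNIV \<gamma>" and periodic: "\<And>s. \<gamma> (s + L) = \<gamma> s" and "0 < L"
    and inj: "inj_on \<gamma> {0..<L}" and "0 < \<delta>" "\<delta> \<le> L - \<delta>"
  obtains m where "0 < m"
    and "\<And>s h. s \<in> {0..L} \<Longrightarrow> h \<in> {\<delta>..L - \<delta>} \<Longrightarrow> m \<le> koranyi_dist (\<gamma> s) (\<gamma> (s + h))"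
proof -
  define K where "K = {0..L} \<times> {\<delta>..L - \<delta>}"
  define \<Phi> where "\<Phi> z = koranyi_dist (\<gamma> (fst z)) (\<gamma> (fst z + snd z))" for z
  have "continuous_on UNIV (\<lambda>z :: real \<times> real. \<gamma> (fst z))"
    "continuous_on UNIV (\<lambda>z :: real \<times> real. \<gamma> (fst z + snd z))"
    by (rule continuous_on_compose2[OF cont], auto intro!: continuous_intros)+
  then have "continuous_on K \<Phi>"
    unfolding \<Phi>_def by (rule continuous_on_subset[OF continuous_on_koranyi_dist]) simp
  moreover have "compact K" "K \<noteq> {}"
    using assms by (auto simp: K_def compact_Times)
  ultimately obtain z where z: "z \<in> K" "\<And>z'. z' \<in> K \<Longrightarrow> \<Phi> z \<le> \<Phi> z'"
    by (metis continuous_attains_inf)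
  have "\<gamma> (fst z) \<noteq> \<gamma> (fst z + snd z)"
    using z(1) assms by (intro periodic_inj_on_neq[OF periodic \<open>0 < L\<close> inj]) (auto simp: K_def)
  then have "0 < \<Phi> z"
    using koranyi_dist_nonneg koranyi_dist_eq_0_iff by (simp add: \<Phi>_def order_less_le)
  with z show thesis
    by (intro that[of "\<Phi> z"]) (auto simp: K_def \<Phi>_def)
qed

lemma periodic_smooth_second_deriv_bounded:
  assumes "smooth_real f" "\<And>s. f (s + L) = f s" "0 < L"
  obtains B where "\<And>s. \<bar>deriv (deriv f) s\<bar> \<le> B"
proof (rule periodic_continuous_bounded)
  show "deriv (deriv f) (s + L) = deriv (deriv f) s" for s
    using assms(2) by (intro deriv_periodic)+
  show "continuous_on UNIV (deriv (deriv f))"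
    by (intro smooth_real_continuous_on smooth_real_deriv assms(1))
qed (use assms in auto)

lemma Psi_loc_eq_interval:
  fixes \<gamma> :: "real \<Rightarrow> heis"
  assumes periodic: "\<And>s. \<gamma> (s + L) = \<gamma> s" and "0 < L" and cont: "continuous_on UNIV \<gamma>"
    and "c \<le> a" "b \<le> c + L" "a \<le> b"
    and ball: "\<And>h. h \<in> {c..<c + L} \<Longrightarrow> koranyi_dist p (\<gamma> (s\<^sub>0 + h)) < t \<longleftrightarrow> a < h \<and> h < b"
  shows "Psi_loc \<gamma> L p t = b - a"
proof -
  define Q where "Q s \<longleftrightarrow> koranyi_dist p (\<gamma> s) < t" for s
  have "open {s. Q s}"
    unfolding Q_def
    by (rule open_Collect_less[OF continuous_on_koranyi_dist[OF continuous_on_const cont]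
          continuous_on_const])
  then have "{s. Q s} \<in> sets lebesgue"
    by (metis borel_open sets_completionI_sets sets_lborel)
  moreover have "Q (s + L) = Q s" for s
    using periodic by (simp add: Q_def)
  ultimately have "measure lebesgue {s \<in> {s\<^sub>0 + c..<s\<^sub>0 + c + L}. Q s}
      = measure lebesgue {s \<in> {0..<L}. Q s}"
    using measure_periodic_window[OF _ \<open>0 < L\<close>] by blast
  then have "Psi_loc \<gamma> L p t = measure lebesgue {s \<in> {s\<^sub>0 + c..<s\<^sub>0 + c + L}. Q s}"
    by (simp add: Psi_loc_def Q_def)
  also have "{s \<in> {s\<^sub>0 + c..<s\<^sub>0 + c + L}. Q s} = {s\<^sub>0 + a<..<s\<^sub>0 + b}"
  proof -
    have "s \<in> {s\<^sub>0 + c..<s\<^sub>0 + c + L} \<and> Q s \<longleftrightarrow> s \<in> {s\<^sub>0 + a<..<s\<^sub>0 + b}" for s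
      using ball[of "s - s\<^sub>0"] assms(4,5) by (auto simp: Q_def)
    then show ?thesis
      by blast
  qed
  also have "measure lebesgue {s\<^sub>0 + a<..<s\<^sub>0 + b} = b - a"
    using \<open>a \<le> b\<close> by (subst measure_completion) auto
  finally show ?thesis .
qed

context bounded_legendrian_curve
begin

lemma Psi_loc_smooth_odd_extension:
  assumes periodic: "\<And>s. curve (s + L) = curve s"
    and "0 < \<delta>" "2 * \<delta> \<le> L" "M * (2 * \<delta>) \<le> 1 / 16"
    and far: "\<And>h. h \<in> {\<delta>..L - \<delta>} \<Longrightarrow> m \<le> koranyi_dist (curve s\<^sub>0) (curve (s\<^sub>0 + h))"
    and "0 < \<epsilon>" "\<epsilon> \<le> \<delta> / 2" "\<epsilon> \<le> m"
  obtains g where "smooth_real_on {-\<epsilon><..<\<epsilon>} g" and "\<And>t. g (- t) = - g t"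
    and "\<And>t. t \<in> {0<..<\<epsilon>} \<Longrightarrow> g t = Psi_loc curve L (curve s\<^sub>0) t"
proof -
  obtain ri where ri_smooth: "\<And>n. derivs_differentiable_on n {-\<delta>/2<..<\<delta>/2} ri"
    and ri_range: "\<And>t. t \<in> {-\<delta>/2<..<\<delta>/2} \<Longrightarrow> ri t \<in> {-\<delta><..<\<delta>}"
    and ri_ball: "\<And>t h. t \<in> {0<..<\<delta>/2} \<Longrightarrow> h \<in> {-\<delta>..\<delta>} \<Longrightarrow>
                    root 4 (gauge4 s\<^sub>0 h) < t \<longleftrightarrow> ri (-t) < h \<and> h < ri t"
    using gauge4_local_inverse[OF \<open>0 < \<delta>\<close> \<open>M * (2 * \<delta>) \<le> 1 / 16\<close>] by metis
  show thesis
  proof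
    show "smooth_real_on {-\<epsilon><..<\<epsilon>} (\<lambda>t. ri t - ri (- t))"
      using \<open>\<epsilon> \<le> \<delta> / 2\<close>
      by (intro smooth_real_on_odd_part derivs_differentiable_on_subset[OF ri_smooth]) auto
  next
    fix t assume t: "t \<in> {0<..<\<epsilon>}"
    then have "t \<in> {0<..<\<delta>/2}"
      using \<open>\<epsilon> \<le> \<delta> / 2\<close> by simp
    then have "-\<delta> < ri (-t)" "ri (-t) < 0" "0 < ri t" "ri t < \<delta>"
      using ri_ball[of t 0] ri_range[of t] ri_range[of "-t"] \<open>0 < \<delta>\<close> by (auto simp: gauge4_at_0)
    have ball: "koranyi_dist (curve s\<^sub>0) (curve (s\<^sub>0 + h)) < t \<longleftrightarrow> ri (- t) < h \<and> h < ri t"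
      if "h \<in> {-\<delta>..<-\<delta> + L}" for h
    proof (cases "h \<le> \<delta>")
      case True
      then show ?thesis
        using ri_ball[OF \<open>t \<in> {0<..<\<delta>/2}\<close>] that by (simp add: koranyi_dist_curve)
    next
      case False
      then show ?thesis
        using far[of h] that t \<open>ri t < \<delta>\<close> \<open>\<epsilon> \<le> m\<close> by auto
    qed
    have "Psi_loc curve L (curve s\<^sub>0) t = ri t - ri (- t)"
      by (rule Psi_loc_eq_interval[where c = "-\<delta>", OF periodic _ continuous_on_curve _ _ _ ball])
        (use \<open>-\<delta> < ri (-t)\<close> \<open>ri (-t) < 0\<close> \<open>0 < ri t\<close> \<open>ri t < \<delta>\<close> assms(2,3) in auto)
    then show "ri t - ri (- t) = Psi_loc curve L (curve s\<^sub>0) t"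
      by simp
  qed simp
qed

end

lemma legendrian_knot_bounded_curve:
  assumes "legendrian_knot \<gamma> L"
  obtains x y u M where "bounded_legendrian_curve x y u M" and "\<gamma> = legendrian_curve.curve x y u"
proof -
  define x y u where "x s = fst (\<gamma> s)" and "y s = fst (snd (\<gamma> s))" and "u s = snd (snd (\<gamma> s))"
    for s
  have knot: "0 < L" "smooth_real x" "smooth_real y" "\<And>s. \<gamma> (s + L) = \<gamma> s"
    using assms by (simp_all add: legendrian_knot_def x_def[abs_def] y_def[abs_def])
  interpret legendrian_curve x y u
    using assms by unfold_locales (simp_all add: legendrian_knot_def x_def[abs_def] y_def[abs_def]
        u_def[abs_def])
  obtain Bx By where "\<And>s. \<bar>deriv (deriv x) s\<bar> \<le> Bx" "\<And>s. \<bar>deriv (deriv y) s\<bar> \<le> By"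
    using periodic_smooth_second_deriv_bounded[of _ L] knot by (metis x_def y_def)
  then have "bounded_legendrian_curve x y u (max Bx By)"
    by unfold_locales (simp_all add: le_max_iff_disj)
  moreover have "\<gamma> = curve"
    by (rule ext) (simp add: curve_def x_def y_def u_def)
  ultimately show thesis
    using that by blast
qed

theorem proposition2p1:
  assumes "legendrian_knot \<gamma> L"
  shows "\<exists>\<epsilon>>0. \<forall>p\<in>\<gamma> ` {0..<L}. \<exists>g :: real \<Rightarrow> real.
           smooth_real_on {-\<epsilon><..<\<epsilon>} g \<and>
           (\<forall>t\<in>{-\<epsilon><..<\<epsilon>}. g (-t) = - g t) \<and>
           (\<forall>t\<in>{0<..<\<epsilon>}. g t = Psi_loc \<gamma> L p t)"
proof -
  obtain x y u M where "bounded_legendrian_curve x y u M" and \<gamma>: "\<gamma> = legendrian_curve.curve x y u"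
    using legendrian_knot_bounded_curve[OF assms] by blast
  then interpret bounded_legendrian_curve x y u M
    by simp
  have "0 < L" and periodic: "\<And>s. curve (s + L) = curve s" and "inj_on curve {0..<L}"
    using assms by (simp_all add: legendrian_knot_def flip: \<gamma>)
  define \<delta> where "\<delta> = min (L / 2) (1 / (32 * (M + 1)))"
  have "0 < \<delta>" "2 * \<delta> \<le> L" "M * (2 * \<delta>) \<le> 1 / 16"
    using \<open>0 < L\<close> M_nonneg by (auto simp: \<delta>_def min_def field_simps)
  obtain m where "0 < m"
    and far: "\<And>s h. s \<in> {0..L} \<Longrightarrow> h \<in> {\<delta>..L - \<delta>} \<Longrightarrow> m \<le> koranyi_dist (curve s) (curve (s + h))"
    using periodic_curve_koranyi_separated[OF continuous_on_curve periodic \<open>0 < L\<close>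
        \<open>inj_on curve {0..<L}\<close> \<open>0 < \<delta>\<close>] \<open>2 * \<delta> \<le> L\<close> by auto
  define \<epsilon> where "\<epsilon> = min (\<delta> / 2) m"
  have "0 < \<epsilon>" "\<epsilon> \<le> \<delta> / 2" "\<epsilon> \<le> m"
    using \<open>0 < \<delta>\<close> \<open>0 < m\<close> by (simp_all add: \<epsilon>_def)
  have "\<exists>g. smooth_real_on {-\<epsilon><..<\<epsilon>} g \<and> (\<forall>t\<in>{-\<epsilon><..<\<epsilon>}. g (-t) = - g t) \<and>
      (\<forall>t\<in>{0<..<\<epsilon>}. g t = Psi_loc curve L (curve s\<^sub>0) t)" if "s\<^sub>0 \<in> {0..<L}" for s\<^sub>0
    using Psi_loc_smooth_odd_extension[OF periodic \<open>0 < \<delta>\<close> \<open>2 * \<delta> \<le> L\<close>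
        \<open>M * (2 * \<delta>) \<le> 1 / 16\<close> far[of s\<^sub>0] \<open>0 < \<epsilon>\<close> \<open>\<epsilon> \<le> \<delta> / 2\<close> \<open>\<epsilon> \<le> m\<close>] that
    by (metis atLeastLessThan_iff atLeastAtMost_iff less_imp_le)
  with \<open>0 < \<epsilon>\<close> show ?thesis
    unfolding \<gamma> by blast
qed

end
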